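(* Let $\mathcal{D}$ be a triangulated category with Serre functor $\mathbb{S}$ and let $\sigma\in\operatorname{Stab}\mathcal{D}$. If $\phi_\sigma(\mathbb{S})$ exists, then $\operatorname{gldim}\sigma=\phi_\sigma(\mathbb{S})$.
   Context: A Serre functor is an autoequivalence $\mathbb{S}$ with natural isomorphisms $\operatorname{Hom}(L,M)\cong\operatorname{Hom}(M,\mathbb{S}(L))^*$. For a Bridgeland stability condition $\sigma=(Z,\mathcal{P})$, an autoequivalence $\Phi$ is $\sigma$-semistable if it preserves the class of semistable objects $\bigcup_\phi\mathcal{P}(\phi)$; $\phi_\sigma(\Phi)$ exists and equals $s\in\mathbb{R}$ if $\Phi$ is $\sigma$-semistable and $\phi_\sigma(\Phi(E))-\phi_\sigma(E)=s$ for every semistable $E$, where $\phi_\sigma(E)$ is the phase of $E$. $\operatorname{gldim}\sigma=\sup\{\phi_2-\phi_1\mid \operatorname{Hom}(A_1,A_2)\neq0\text{ for some nonzero }A_i\in\mathcal{P}(\phi_i)\}$. *)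

theory Defs
  imports Complex_Main "HOL-Library.Extended_Real"
begin

record ('o, 'm, 'k) tricat =
  Ob :: "'o set"
  Hom :: "'o \<Rightarrow> 'o \<Rightarrow> 'm set"
  comp :: "'m \<Rightarrow> 'm \<Rightarrow> 'm"          (* comp g f = g o f *)
  idm :: "'o \<Rightarrow> 'm"
  madd :: "'m \<Rightarrow> 'm \<Rightarrow> 'm"
  msmult :: "'k \<Rightarrow> 'm \<Rightarrow> 'm"
  mzero :: "'o \<Rightarrow> 'o \<Rightarrow> 'm"
  shO :: "'o \<Rightarrow> 'o"                 (* shift functor [1] on objects *)
  shM :: "'m \<Rightarrow> 'm"                 (* shift functor [1] on morphisms *)
  dist :: "('o \<times> 'o \<times> 'o \<times> 'm \<times> 'm \<times> 'm) set"   (* distinguished triangles X->Y->W->X[1] *)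

definition category :: "('o, 'm, 'k) tricat \<Rightarrow> bool" where
  "category C \<longleftrightarrow>
     (\<forall>X Y. Hom C X Y \<noteq> {} \<longrightarrow> X \<in> Ob C \<and> Y \<in> Ob C) \<and>
     (\<forall>X Y X' Y'. (X, Y) \<noteq> (X', Y') \<longrightarrow> Hom C X Y \<inter> Hom C X' Y' = {}) \<and>
     (\<forall>X\<in>Ob C. idm C X \<in> Hom C X X) \<and>
     (\<forall>X\<in>Ob C. \<forall>Y\<in>Ob C. \<forall>W\<in>Ob C. \<forall>f\<in>Hom C X Y. \<forall>g\<in>Hom C Y W.
        comp C g f \<in> Hom C X W) \<and>
     (\<forall>X\<in>Ob C. \<forall>Y\<in>Ob C. \<forall>f\<in>Hom C X Y.
        comp C f (idm C X) = f \<and> comp C (idm C Y) f = f) \<and>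
     (\<forall>V\<in>Ob C. \<forall>X\<in>Ob C. \<forall>Y\<in>Ob C. \<forall>W\<in>Ob C.
        \<forall>f\<in>Hom C V X. \<forall>g\<in>Hom C X Y. \<forall>h\<in>Hom C Y W.
        comp C h (comp C g f) = comp C (comp C h g) f)"

definition klinear :: "('o, 'm, 'k::field) tricat \<Rightarrow> bool" where
  "klinear C \<longleftrightarrow> category C \<and>
     (\<forall>X\<in>Ob C. \<forall>Y\<in>Ob C.
        mzero C X Y \<in> Hom C X Y \<and>
        (\<forall>f\<in>Hom C X Y. \<forall>g\<in>Hom C X Y. madd C f g \<in> Hom C X Y) \<and>
        (\<forall>a. \<forall>f\<in>Hom C X Y. msmult C a f \<in> Hom C X Y) \<and>
        (\<forall>f\<in>Hom C X Y. \<forall>g\<in>Hom C X Y. \<forall>h\<in>Hom C X Y.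
           madd C (madd C f g) h = madd C f (madd C g h)) \<and>
        (\<forall>f\<in>Hom C X Y. \<forall>g\<in>Hom C X Y. madd C f g = madd C g f) \<and>
        (\<forall>f\<in>Hom C X Y. madd C f (mzero C X Y) = f) \<and>
        (\<forall>f\<in>Hom C X Y. \<exists>g\<in>Hom C X Y. madd C f g = mzero C X Y) \<and>
        (\<forall>a. \<forall>f\<in>Hom C X Y. \<forall>g\<in>Hom C X Y.
           msmult C a (madd C f g) = madd C (msmult C a f) (msmult C a g)) \<and>
        (\<forall>a b. \<forall>f\<in>Hom C X Y. msmult C (a + b) f = madd C (msmult C a f) (msmult C b f)) \<and>
        (\<forall>a b. \<forall>f\<in>Hom C X Y. msmult C a (msmult C b f) = msmult C (a * b) f) \<and>
        (\<forall>f\<in>Hom C X Y. msmult C 1 f = f)) \<and>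
     (\<forall>X\<in>Ob C. \<forall>Y\<in>Ob C. \<forall>W\<in>Ob C.
        \<forall>f\<in>Hom C X Y. \<forall>f'\<in>Hom C X Y. \<forall>g\<in>Hom C Y W. \<forall>g'\<in>Hom C Y W. \<forall>a.
        comp C g (madd C f f') = madd C (comp C g f) (comp C g f') \<and>
        comp C (madd C g g') f = madd C (comp C g f) (comp C g' f) \<and>
        comp C g (msmult C a f) = msmult C a (comp C g f) \<and>
        comp C (msmult C a g) f = msmult C a (comp C g f))"

fun lcomb :: "('o, 'm, 'k) tricat \<Rightarrow> 'o \<Rightarrow> 'o \<Rightarrow> ('k \<times> 'm) list \<Rightarrow> 'm" where
  "lcomb C X Y [] = mzero C X Y"
| "lcomb C X Y ((a, b) # r) = madd C (msmult C a b) (lcomb C X Y r)"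

definition hom_finite :: "('o, 'm, 'k) tricat \<Rightarrow> bool" where
  "hom_finite C \<longleftrightarrow> (\<forall>X\<in>Ob C. \<forall>Y\<in>Ob C. \<exists>bs. set bs \<subseteq> Hom C X Y \<and>
      (\<forall>f\<in>Hom C X Y. \<exists>cs. length cs = length bs \<and> f = lcomb C X Y (zip cs bs)))"

definition is_zero :: "('o, 'm, 'k) tricat \<Rightarrow> 'o \<Rightarrow> bool" where
  "is_zero C X \<longleftrightarrow> X \<in> Ob C \<and> idm C X = mzero C X X"

definition is_iso :: "('o, 'm, 'k) tricat \<Rightarrow> 'o \<Rightarrow> 'o \<Rightarrow> 'm \<Rightarrow> bool" where
  "is_iso C X Y f \<longleftrightarrow> f \<in> Hom C X Y \<and>
     (\<exists>g\<in>Hom C Y X. comp C g f = idm C X \<and> comp C f g = idm C Y)"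

definition isomorphic :: "('o, 'm, 'k) tricat \<Rightarrow> 'o \<Rightarrow> 'o \<Rightarrow> bool" where
  "isomorphic C X Y \<longleftrightarrow> (\<exists>f. is_iso C X Y f)"

definition is_biproduct ::
  "('o, 'm, 'k) tricat \<Rightarrow> 'o \<Rightarrow> 'o \<Rightarrow> 'o \<Rightarrow> 'm \<Rightarrow> 'm \<Rightarrow> 'm \<Rightarrow> 'm \<Rightarrow> bool" where
  "is_biproduct C X Y W i1 i2 p1 p2 \<longleftrightarrow> W \<in> Ob C \<and>
     i1 \<in> Hom C X W \<and> i2 \<in> Hom C Y W \<and> p1 \<in> Hom C W X \<and> p2 \<in> Hom C W Y \<and>
     comp C p1 i1 = idm C X \<and> comp C p2 i2 = idm C Y \<and>
     comp C p1 i2 = mzero C Y X \<and> comp C p2 i1 = mzero C X Y \<and>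
     madd C (comp C i1 p1) (comp C i2 p2) = idm C W"

definition additive :: "('o, 'm, 'k::field) tricat \<Rightarrow> bool" where
  "additive C \<longleftrightarrow> klinear C \<and> (\<exists>X. is_zero C X) \<and>
     (\<forall>X\<in>Ob C. \<forall>Y\<in>Ob C. \<exists>W i1 i2 p1 p2. is_biproduct C X Y W i1 i2 p1 p2)"

definition kfunctor :: "('o, 'm, 'k) tricat \<Rightarrow> ('o \<Rightarrow> 'o) \<Rightarrow> ('m \<Rightarrow> 'm) \<Rightarrow> bool" where
  "kfunctor C Fo Fm \<longleftrightarrow>
     (\<forall>X\<in>Ob C. Fo X \<in> Ob C) \<and>
     (\<forall>X\<in>Ob C. \<forall>Y\<in>Ob C. \<forall>f\<in>Hom C X Y. Fm f \<in> Hom C (Fo X) (Fo Y)) \<and>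
     (\<forall>X\<in>Ob C. Fm (idm C X) = idm C (Fo X)) \<and>
     (\<forall>X\<in>Ob C. \<forall>Y\<in>Ob C. \<forall>W\<in>Ob C. \<forall>f\<in>Hom C X Y. \<forall>g\<in>Hom C Y W.
        Fm (comp C g f) = comp C (Fm g) (Fm f)) \<and>
     (\<forall>X\<in>Ob C. \<forall>Y\<in>Ob C. \<forall>f\<in>Hom C X Y. \<forall>g\<in>Hom C X Y. \<forall>a.
        Fm (madd C f g) = madd C (Fm f) (Fm g) \<and> Fm (msmult C a f) = msmult C a (Fm f))"

definition autoequiv :: "('o, 'm, 'k) tricat \<Rightarrow> ('o \<Rightarrow> 'o) \<Rightarrow> ('m \<Rightarrow> 'm) \<Rightarrow> bool" where
  "autoequiv C Fo Fm \<longleftrightarrow> kfunctor C Fo Fm \<and>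
     (\<forall>X\<in>Ob C. \<forall>Y\<in>Ob C. bij_betw Fm (Hom C X Y) (Hom C (Fo X) (Fo Y))) \<and>
     (\<forall>Y\<in>Ob C. \<exists>X\<in>Ob C. isomorphic C (Fo X) Y)"

definition triangle :: "('o, 'm, 'k) tricat \<Rightarrow> 'o \<Rightarrow> 'o \<Rightarrow> 'o \<Rightarrow> 'm \<Rightarrow> 'm \<Rightarrow> 'm \<Rightarrow> bool" where
  "triangle C X Y W f g h \<longleftrightarrow> X \<in> Ob C \<and> Y \<in> Ob C \<and> W \<in> Ob C \<and>
     f \<in> Hom C X Y \<and> g \<in> Hom C Y W \<and> h \<in> Hom C W (shO C X)"

definition tri_morphism ::
  "('o, 'm, 'k) tricat \<Rightarrow> 'o \<Rightarrow> 'o \<Rightarrow> 'o \<Rightarrow> 'm \<Rightarrow> 'm \<Rightarrow> 'm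
     \<Rightarrow> 'o \<Rightarrow> 'o \<Rightarrow> 'o \<Rightarrow> 'm \<Rightarrow> 'm \<Rightarrow> 'm \<Rightarrow> 'm \<Rightarrow> 'm \<Rightarrow> 'm \<Rightarrow> bool" where
  "tri_morphism C X Y W f g h X' Y' W' f' g' h' a b c \<longleftrightarrow>
     a \<in> Hom C X X' \<and> b \<in> Hom C Y Y' \<and> c \<in> Hom C W W' \<and>
     comp C f' a = comp C b f \<and> comp C g' b = comp C c g \<and>
     comp C (shM C a) h = comp C h' c"

definition mneg :: "('o, 'm, 'k::field) tricat \<Rightarrow> 'm \<Rightarrow> 'm" where
  "mneg C f = msmult C (- 1) f"

definition triangulated :: "('o, 'm, 'k::field) tricat \<Rightarrow> bool" where
  "triangulated C \<longleftrightarrow> additive C \<and> hom_finite C \<and> autoequiv C (shO C) (shM C) \<and>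
     (\<forall>X Y W f g h. (X, Y, W, f, g, h) \<in> dist C \<longrightarrow> triangle C X Y W f g h) \<and>
     \<comment> \<open>TR1: closed under isomorphisms of triangles\<close>
     (\<forall>X Y W f g h X' Y' W' f' g' h' a b c.
        (X, Y, W, f, g, h) \<in> dist C \<longrightarrow> triangle C X' Y' W' f' g' h' \<longrightarrow>
        tri_morphism C X Y W f g h X' Y' W' f' g' h' a b c \<longrightarrow>
        is_iso C X X' a \<longrightarrow> is_iso C Y Y' b \<longrightarrow> is_iso C W W' c \<longrightarrow>
        (X', Y', W', f', g', h') \<in> dist C) \<and>
     \<comment> \<open>TR1: X -> X -> 0 -> X[1]\<close>
     (\<forall>X\<in>Ob C. \<forall>Z0. is_zero C Z0 \<longrightarrow>
        (X, X, Z0, idm C X, mzero C X Z0, mzero C Z0 (shO C X)) \<in> dist C) \<and>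
     \<comment> \<open>TR1: every morphism extends to a distinguished triangle\<close>
     (\<forall>X\<in>Ob C. \<forall>Y\<in>Ob C. \<forall>f\<in>Hom C X Y. \<exists>W g h. (X, Y, W, f, g, h) \<in> dist C) \<and>
     \<comment> \<open>TR2: rotation\<close>
     (\<forall>X Y W f g h. triangle C X Y W f g h \<longrightarrow>
        ((X, Y, W, f, g, h) \<in> dist C \<longleftrightarrow>
         (Y, W, shO C X, g, h, mneg C (shM C f)) \<in> dist C)) \<and>
     \<comment> \<open>TR3: completion of morphisms of triangles\<close>
     (\<forall>X Y W f g h X' Y' W' f' g' h' a b.
        (X, Y, W, f, g, h) \<in> dist C \<longrightarrow> (X', Y', W', f', g', h') \<in> dist C \<longrightarrow>
        a \<in> Hom C X X' \<longrightarrow> b \<in> Hom C Y Y' \<longrightarrow> comp C f' a = comp C b f \<longrightarrow>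
        (\<exists>c. tri_morphism C X Y W f g h X' Y' W' f' g' h' a b c)) \<and>
     \<comment> \<open>TR4: octahedral axiom\<close>
     (\<forall>X Y Z Z' X' Y' f g h j k l m n.
        (X, Y, Z', f, h, j) \<in> dist C \<longrightarrow>
        (Y, Z, X', g, k, l) \<in> dist C \<longrightarrow>
        (X, Z, Y', comp C g f, m, n) \<in> dist C \<longrightarrow>
        (\<exists>u v. (Z', Y', X', u, v, comp C (shM C h) l) \<in> dist C \<and>
               comp C u h = comp C m g \<and> comp C n u = j \<and>
               comp C v m = k \<and> comp C l v = comp C (shM C f) n))"

definition lin_funcs :: "('o, 'm, 'k::field) tricat \<Rightarrow> 'o \<Rightarrow> 'o \<Rightarrow> ('m \<Rightarrow> 'k) set" where
  "lin_funcs C X Y = {\<phi>.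
     (\<forall>f\<in>Hom C X Y. \<forall>g\<in>Hom C X Y. \<phi> (madd C f g) = \<phi> f + \<phi> g) \<and>
     (\<forall>a. \<forall>f\<in>Hom C X Y. \<phi> (msmult C a f) = a * \<phi> f) \<and>
     (\<forall>f. f \<notin> Hom C X Y \<longrightarrow> \<phi> f = 0)}"

text \<open>A Serre functor: a (k-linear) autoequivalence S together with isomorphisms
  Hom(L,M) = Hom(M, S L)^* (k-linear, natural in L and M).\<close>

definition serre_functor :: "('o, 'm, 'k::field) tricat \<Rightarrow> ('o \<Rightarrow> 'o) \<Rightarrow> ('m \<Rightarrow> 'm) \<Rightarrow> bool" where
  "serre_functor C So Sm \<longleftrightarrow> autoequiv C So Sm \<and>
     (\<exists>\<eta> :: 'o \<Rightarrow> 'o \<Rightarrow> 'm \<Rightarrow> 'm \<Rightarrow> 'k.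
        (\<forall>L\<in>Ob C. \<forall>M\<in>Ob C.
           bij_betw (\<eta> L M) (Hom C L M) (lin_funcs C M (So L)) \<and>
           (\<forall>u\<in>Hom C L M. \<forall>u'\<in>Hom C L M. \<forall>a.
              \<eta> L M (madd C u u') = (\<lambda>v. \<eta> L M u v + \<eta> L M u' v) \<and>
              \<eta> L M (msmult C a u) = (\<lambda>v. a * \<eta> L M u v)) \<and>
           (\<forall>M'\<in>Ob C. \<forall>u\<in>Hom C L M. \<forall>g\<in>Hom C M M'. \<forall>v\<in>Hom C M' (So L).
              \<eta> L M' (comp C g u) v = \<eta> L M u (comp C v g)) \<and>
           (\<forall>L'\<in>Ob C. \<forall>u\<in>Hom C L M. \<forall>f\<in>Hom C L' L. \<forall>v\<in>Hom C M (So L').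
              \<eta> L' M (comp C u f) v = \<eta> L M u (comp C (Sm f) v))))"

definition slicing :: "('o, 'm, 'k::field) tricat \<Rightarrow> (real \<Rightarrow> 'o set) \<Rightarrow> bool" where
  "slicing C P \<longleftrightarrow>
     (\<forall>\<phi>. P \<phi> \<subseteq> Ob C) \<and>
     \<comment> \<open>each P(phi) is a (strictly) full additive subcategory\<close>
     (\<forall>\<phi> Z0. is_zero C Z0 \<longrightarrow> Z0 \<in> P \<phi>) \<and>
     (\<forall>\<phi>. \<forall>A\<in>P \<phi>. \<forall>B. isomorphic C A B \<longrightarrow> B \<in> P \<phi>) \<and>
     (\<forall>\<phi>. \<forall>A\<in>P \<phi>. \<forall>B\<in>P \<phi>. \<forall>W i1 i2 p1 p2.
        is_biproduct C A B W i1 i2 p1 p2 \<longrightarrow> W \<in> P \<phi>) \<and>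
     \<comment> \<open>P(phi + 1) = P(phi)[1]\<close>
     (\<forall>\<phi> A. A \<in> P (\<phi> + 1) \<longleftrightarrow> (\<exists>B\<in>P \<phi>. isomorphic C A (shO C B))) \<and>
     \<comment> \<open>Hom-vanishing\<close>
     (\<forall>\<phi>1 \<phi>2. \<phi>1 > \<phi>2 \<longrightarrow> (\<forall>A1\<in>P \<phi>1. \<forall>A2\<in>P \<phi>2. Hom C A1 A2 = {mzero C A1 A2})) \<and>
     \<comment> \<open>Harder--Narasimhan filtrations\<close>
     (\<forall>E\<in>Ob C. \<not> is_zero C E \<longrightarrow>
        (\<exists>(n::nat) (Eo::nat \<Rightarrow> 'o) (A::nat \<Rightarrow> 'o) (ph::nat \<Rightarrow> real) f g h.
           is_zero C (Eo 0) \<and> Eo n = E \<and>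
           (\<forall>i\<in>{1..n}. (Eo (i - 1), Eo i, A i, f i, g i, h i) \<in> dist C \<and> A i \<in> P (ph i)) \<and>
           (\<forall>i j. 1 \<le> i \<longrightarrow> i < j \<longrightarrow> j \<le> n \<longrightarrow> ph j < ph i)))"

text \<open>The central charge Z : K_0(D) -> C is encoded by the induced function on objects,
  i.e. a function additive on distinguished triangles (universal property of K_0).\<close>

definition stability_condition ::
  "('o, 'm, 'k::field) tricat \<Rightarrow> ('o \<Rightarrow> complex) \<Rightarrow> (real \<Rightarrow> 'o set) \<Rightarrow> bool" where
  "stability_condition C Z P \<longleftrightarrow> slicing C P \<and>
     (\<forall>X Y W f g h. (X, Y, W, f, g, h) \<in> dist C \<longrightarrow> Z Y = Z X + Z W) \<and>
     (\<forall>\<phi>. \<forall>E\<in>P \<phi>. \<not> is_zero C E \<longrightarrow>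
        (\<exists>m::real. m > 0 \<and> Z E = complex_of_real m * cis (pi * \<phi>)))"

definition semistables :: "(real \<Rightarrow> 'o set) \<Rightarrow> 'o set" where
  "semistables P = (\<Union>\<phi>. P \<phi>)"

definition phase :: "(real \<Rightarrow> 'o set) \<Rightarrow> 'o \<Rightarrow> real" where
  "phase P E = (THE \<phi>. E \<in> P \<phi>)"

text \<open>phi_sigma(Phi) exists and equals s.\<close>

definition functor_phase :: "('o, 'm, 'k) tricat \<Rightarrow> (real \<Rightarrow> 'o set) \<Rightarrow> ('o \<Rightarrow> 'o) \<Rightarrow> real \<Rightarrow> bool" where
  "functor_phase C P Fo s \<longleftrightarrow>
     (\<forall>E\<in>semistables P. Fo E \<in> semistables P) \<and>
     (\<forall>E\<in>semistables P. \<not> is_zero C E \<longrightarrow> phase P (Fo E) - phase P E = s)"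

definition gldim :: "('o, 'm, 'k) tricat \<Rightarrow> (real \<Rightarrow> 'o set) \<Rightarrow> ereal" where
  "gldim C P = Sup {ereal (\<phi>2 - \<phi>1) | \<phi>1 \<phi>2. \<exists>A1\<in>P \<phi>1. \<exists>A2\<in>P \<phi>2.
      \<not> is_zero C A1 \<and> \<not> is_zero C A2 \<and> Hom C A1 A2 \<noteq> {mzero C A1 A2}}"

end

theory Submission
  imports Defs
begin

text \<open>Serre duality makes \<open>Hom(A\<^sub>1, A\<^sub>2) \<noteq> 0\<close> equivalent to \<open>Hom(A\<^sub>2, \<SS> A\<^sub>1) \<noteq> 0\<close>.
  If \<open>A\<^sub>i\<close> is semistable of phase \<open>\<phi>\<^sub>i\<close>, then \<open>\<SS> A\<^sub>1\<close> is semistable of phase \<open>\<phi>\<^sub>1 + s\<close>, and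
  Hom-vanishing of the slicing forces \<open>\<phi>\<^sub>2 \<le> \<phi>\<^sub>1 + s\<close>; so \<open>gldim \<sigma> \<le> s\<close>. Conversely, for
  any nonzero semistable \<open>A\<close> (one exists: take a factor of a Harder--Narasimhan filtration),
  dualising \<open>id\<^sub>A\<close> gives a nonzero map \<open>A \<rightarrow> \<SS> A\<close> of phase gap exactly \<open>s\<close>.\<close>

lemma category_Hom_Ob: "category C \<Longrightarrow> f \<in> Hom C X Y \<Longrightarrow> X \<in> Ob C \<and> Y \<in> Ob C"
  unfolding category_def by (metis empty_iff)

lemma category_idm_in: "category C \<Longrightarrow> X \<in> Ob C \<Longrightarrow> idm C X \<in> Hom C X X"
  unfolding category_def by blast

lemma category_comp_in:
  assumes "category C" "f \<in> Hom C X Y" "g \<in> Hom C Y W"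
  shows "comp C g f \<in> Hom C X W"
proof -
  have "X \<in> Ob C" "Y \<in> Ob C" "W \<in> Ob C"
    using category_Hom_Ob assms by metis+
  then show ?thesis
    using assms unfolding category_def by blast
qed

lemma category_comp_idm:
  assumes "category C" "f \<in> Hom C X Y"
  shows "comp C f (idm C X) = f" and "comp C (idm C Y) f = f"
proof -
  have "X \<in> Ob C" "Y \<in> Ob C"
    using category_Hom_Ob assms by metis+
  then show "comp C f (idm C X) = f" and "comp C (idm C Y) f = f"
    using assms unfolding category_def by blast+
qed

lemma klinear_category: "klinear C \<Longrightarrow> category C"
  unfolding klinear_def by blast

lemma klinear_Hom_Ob:
  "klinear C \<Longrightarrow> f \<in> Hom C X Y \<Longrightarrow> X \<in> Ob C \<and> Y \<in> Ob C"
  by (rule category_Hom_Ob[OF klinear_category])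

lemma klinear_Hom_space:
  assumes "klinear C" "X \<in> Ob C" "Y \<in> Ob C"
  shows "mzero C X Y \<in> Hom C X Y"
    and "f \<in> Hom C X Y \<Longrightarrow> msmult C a f \<in> Hom C X Y"
    and "f \<in> Hom C X Y \<Longrightarrow> g \<in> Hom C X Y \<Longrightarrow> h \<in> Hom C X Y \<Longrightarrow>
      madd C (madd C f g) h = madd C f (madd C g h)"
    and "f \<in> Hom C X Y \<Longrightarrow> madd C f (mzero C X Y) = f"
    and "f \<in> Hom C X Y \<Longrightarrow> \<exists>g\<in>Hom C X Y. madd C f g = mzero C X Y"
    and "f \<in> Hom C X Y \<Longrightarrow> msmult C (a + b) f = madd C (msmult C a f) (msmult C b f)"
  using assms(1)[unfolded klinear_def, THEN conjunct2, THEN conjunct1, rule_format, OF assms(2,3)]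
  by (elim conjE; metis)+

lemma klinear_comp_msmult:
  assumes "klinear C" "f \<in> Hom C X Y" "g \<in> Hom C Y W"
  shows "comp C g (msmult C a f) = msmult C a (comp C g f)"
    and "comp C (msmult C a g) f = msmult C a (comp C g f)"
proof -
  have "X \<in> Ob C" "Y \<in> Ob C" "W \<in> Ob C"
    using klinear_Hom_Ob[OF assms(1,2)] klinear_Hom_Ob[OF assms(1,3)] by auto
  note bilinear = assms(1)[unfolded klinear_def, THEN conjunct2, THEN conjunct2, rule_format, OF this]
  show "comp C g (msmult C a f) = msmult C a (comp C g f)"
    and "comp C (msmult C a g) f = msmult C a (comp C g f)"
    using bilinear assms(2,3) by simp_all
qed

lemma klinear_msmult_zero:
  assumes k: "klinear C" and f: "f \<in> Hom C X Y"
  shows "msmult C 0 f = mzero C X Y"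
proof -
  have "X \<in> Ob C" "Y \<in> Ob C"
    using klinear_Hom_Ob[OF k f] by auto
  note Hom_XY = klinear_Hom_space[OF k this]
  define h where "h = msmult C 0 f"
  have h: "h \<in> Hom C X Y"
    unfolding h_def using Hom_XY(2)[OF f] .
  have hh: "madd C h h = h"
    unfolding h_def using Hom_XY(6)[OF f, of 0 0] by simp
  obtain h' where h': "h' \<in> Hom C X Y" "madd C h h' = mzero C X Y"
    using Hom_XY(5)[OF h] ..
  have "mzero C X Y = madd C (madd C h h) h'"
    using hh h' by simp
  also have "\<dots> = madd C h (mzero C X Y)"
    using Hom_XY(3)[OF h h h'(1)] h'(2) by simp
  also have "\<dots> = h"
    using Hom_XY(4)[OF h] .
  finally show ?thesis
    unfolding h_def by simp
qed

lemma klinear_comp_mzero_right: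
  assumes k: "klinear C" and X: "X \<in> Ob C" and g: "g \<in> Hom C Y W"
  shows "comp C g (mzero C X Y) = mzero C X W"
proof -
  have Y: "Y \<in> Ob C"
    using klinear_Hom_Ob[OF k g] by simp
  have z: "mzero C X Y \<in> Hom C X Y"
    using klinear_Hom_space(1)[OF k X Y] .
  have "comp C g (mzero C X Y) = comp C g (msmult C 0 (mzero C X Y))"
    using klinear_msmult_zero[OF k z] by simp
  also have "\<dots> = msmult C 0 (comp C g (mzero C X Y))"
    using klinear_comp_msmult(1)[OF k z g] .
  also have "\<dots> = mzero C X W"
    using klinear_msmult_zero[OF k category_comp_in[OF klinear_category[OF k] z g]] .
  finally show ?thesis .
qed

lemma klinear_comp_mzero_left:
  assumes k: "klinear C" and W: "W \<in> Ob C" and f: "f \<in> Hom C X Y"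
  shows "comp C (mzero C Y W) f = mzero C X W"
proof -
  have Y: "Y \<in> Ob C"
    using klinear_Hom_Ob[OF k f] by simp
  have z: "mzero C Y W \<in> Hom C Y W"
    using klinear_Hom_space(1)[OF k Y W] .
  have "comp C (mzero C Y W) f = comp C (msmult C 0 (mzero C Y W)) f"
    using klinear_msmult_zero[OF k z] by simp
  also have "\<dots> = msmult C 0 (comp C (mzero C Y W) f)"
    using klinear_comp_msmult(2)[OF k f z] .
  also have "\<dots> = mzero C X W"
    using klinear_msmult_zero[OF k category_comp_in[OF klinear_category[OF k] f z]] .
  finally show ?thesis .
qed

lemma is_zero_Hom_from:
  assumes k: "klinear C" and Z: "is_zero C Z" and f: "f \<in> Hom C Z Y"
  shows "f = mzero C Z Y"
proof -
  have "f = comp C f (idm C Z)"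
    using category_comp_idm(1)[OF klinear_category[OF k] f] by simp
  also have "\<dots> = mzero C Z Y"
    using Z klinear_comp_mzero_right[OF k _ f] unfolding is_zero_def by simp
  finally show ?thesis .
qed

lemma is_zero_iff_Hom_trivial:
  assumes k: "klinear C" and X: "X \<in> Ob C"
  shows "is_zero C X \<longleftrightarrow> Hom C X X = {mzero C X X}"
  using is_zero_Hom_from[OF k] klinear_Hom_space(1)[OF k X X]
    category_idm_in[OF klinear_category[OF k] X] X
  unfolding is_zero_def by blast

lemma kfunctor_is_zero:
  assumes k: "klinear C" and F: "kfunctor C F Fm" and Z: "is_zero C Z"
  shows "is_zero C (F Z)"
proof -
  have Z_Ob: "Z \<in> Ob C"
    using Z unfolding is_zero_def by simp
  have z: "mzero C Z Z \<in> Hom C Z Z"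
    using klinear_Hom_space(1)[OF k Z_Ob Z_Ob] .
  have FZ_Ob: "F Z \<in> Ob C" and Fz: "Fm (mzero C Z Z) \<in> Hom C (F Z) (F Z)"
    using F Z_Ob z unfolding kfunctor_def by blast+
  have "idm C (F Z) = Fm (idm C Z)"
    using F Z_Ob unfolding kfunctor_def by simp
  also have "\<dots> = Fm (msmult C 0 (mzero C Z Z))"
    using Z klinear_msmult_zero[OF k z] unfolding is_zero_def by simp
  also have "\<dots> = msmult C 0 (Fm (mzero C Z Z))"
    using F Z_Ob z unfolding kfunctor_def by blast
  also have "\<dots> = mzero C (F Z) (F Z)"
    using klinear_msmult_zero[OF k Fz] .
  finally show ?thesis
    unfolding is_zero_def using FZ_Ob by simp
qed

lemma autoequiv_reflects_is_zero:
  assumes k: "klinear C" and F: "autoequiv C F Fm" and X: "X \<in> Ob C" and FX: "is_zero C (F X)"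
  shows "is_zero C X"
proof -
  have bij: "bij_betw Fm (Hom C X X) (Hom C (F X) (F X))"
    using F X unfolding autoequiv_def by blast
  have FX_Ob: "F X \<in> Ob C"
    using FX unfolding is_zero_def by simp
  have "Hom C (F X) (F X) = {mzero C (F X) (F X)}"
    using is_zero_iff_Hom_trivial[OF k FX_Ob] FX by simp
  then have "Fm (idm C X) = Fm (mzero C X X)"
    using bij_betwE[OF bij] category_idm_in[OF klinear_category[OF k] X]
      klinear_Hom_space(1)[OF k X X] by (metis singletonD)
  then have "idm C X = mzero C X X"
    using bij_betw_imp_inj_on[OF bij] category_idm_in[OF klinear_category[OF k] X]
      klinear_Hom_space(1)[OF k X X] by (simp add: inj_on_eq_iff)
  then show ?thesis
    unfolding is_zero_def using X by simp
qed

lemma triangulated_klinear: "triangulated C \<Longrightarrow> klinear C"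
  unfolding triangulated_def additive_def by simp

lemma triangulated_dist_triangle:
  "triangulated C \<Longrightarrow> (X, Y, W, f, g, h) \<in> dist C \<Longrightarrow> triangle C X Y W f g h"
  unfolding triangulated_def by meson

lemma triangulated_rotate:
  "triangulated C \<Longrightarrow> triangle C X Y W f g h \<Longrightarrow>
   (X, Y, W, f, g, h) \<in> dist C \<longleftrightarrow> (Y, W, shO C X, g, h, mneg C (shM C f)) \<in> dist C"
  unfolding triangulated_def by meson

lemma triangulated_dist_idm:
  "triangulated C \<Longrightarrow> X \<in> Ob C \<Longrightarrow> is_zero C Z \<Longrightarrow>
   (X, X, Z, idm C X, mzero C X Z, mzero C Z (shO C X)) \<in> dist C"
  unfolding triangulated_def by meson

lemma triangulated_tri_morphism_exists:
  "triangulated C \<Longrightarrow> (X, Y, W, f, g, h) \<in> dist C \<Longrightarrow> (X', Y', W', f', g', h') \<in> dist C \<Longrightarrow>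
   a \<in> Hom C X X' \<Longrightarrow> b \<in> Hom C Y Y' \<Longrightarrow> comp C f' a = comp C b f \<Longrightarrow>
   \<exists>c. tri_morphism C X Y W f g h X' Y' W' f' g' h' a b c"
  unfolding triangulated_def by meson

lemma triangulated_dist_zero_first:
  assumes t: "triangulated C" and X0: "is_zero C X" and Y: "Y \<in> Ob C"
  shows "(X, Y, Y, mzero C X Y, idm C Y, mzero C Y (shO C X)) \<in> dist C"
proof -
  have k: "klinear C" and c: "category C"
    using triangulated_klinear[OF t] klinear_category by blast+
  have shift: "kfunctor C (shO C) (shM C)"
    using t unfolding triangulated_def autoequiv_def by simp
  have X: "X \<in> Ob C"
    using X0 unfolding is_zero_def by simp
  have SX0: "is_zero C (shO C X)"
    using kfunctor_is_zero[OF k shift X0] .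
  then have SX: "shO C X \<in> Ob C"
    unfolding is_zero_def by simp
  have SY: "shO C Y \<in> Ob C"
    using shift Y unfolding kfunctor_def by blast
  have "shM C (mzero C X Y) \<in> Hom C (shO C X) (shO C Y)"
    using shift X Y klinear_Hom_space(1)[OF k X Y] unfolding kfunctor_def by blast
  then have neg_zero: "mneg C (shM C (mzero C X Y)) = mzero C (shO C X) (shO C Y)"
    unfolding mneg_def using is_zero_Hom_from[OF k SX0] klinear_Hom_space(2)[OF k SX SY] by blast
  have "(Y, Y, shO C X, idm C Y, mzero C Y (shO C X), mzero C (shO C X) (shO C Y)) \<in> dist C"
    using triangulated_dist_idm[OF t Y SX0] .
  moreover have "triangle C X Y Y (mzero C X Y) (idm C Y) (mzero C Y (shO C X))"
    unfolding triangle_def using X Y SX klinear_Hom_space(1)[OF k] category_idm_in[OF c] by blast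
  ultimately show ?thesis
    using triangulated_rotate[OF t] neg_zero by simp
qed

lemma triangulated_dist_is_zero_middle:
  assumes t: "triangulated C" and d: "(X, Y, W, f, g, h) \<in> dist C"
    and X0: "is_zero C X" and W0: "is_zero C W"
  shows "is_zero C Y"
proof -
  have k: "klinear C" and c: "category C"
    using triangulated_klinear[OF t] klinear_category by blast+
  have "triangle C X Y W f g h"
    using triangulated_dist_triangle[OF t d] .
  then have Ob: "X \<in> Ob C" "Y \<in> Ob C" and f: "f \<in> Hom C X Y" and g: "g \<in> Hom C Y W"
    unfolding triangle_def by auto
  have "comp C (mzero C X Y) (idm C X) = comp C (idm C Y) f"
    using is_zero_Hom_from[OF k X0 f] category_comp_idm[OF c klinear_Hom_space(1)[OF k Ob]] by simp
  \<comment> \<open>TR3 against the triangle \<open>X \<rightarrow> Y \<rightarrow> Y \<rightarrow> X[1]\<close> makes \<open>id\<^sub>Y\<close> factor through \<open>W = 0\<close>\<close>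
  then obtain u where "tri_morphism C X Y W f g h X Y Y (mzero C X Y) (idm C Y) (mzero C Y (shO C X))
      (idm C X) (idm C Y) u"
    using triangulated_tri_morphism_exists[OF t d triangulated_dist_zero_first[OF t X0 Ob(2)]]
      category_idm_in[OF c] Ob by blast
  then have u: "u \<in> Hom C W Y" and "comp C (idm C Y) (idm C Y) = comp C u g"
    unfolding tri_morphism_def by auto
  then have "idm C Y = comp C (mzero C W Y) g"
    using is_zero_Hom_from[OF k W0 u] category_comp_idm[OF c category_idm_in[OF c Ob(2)]] by simp
  also have "\<dots> = mzero C Y Y"
    using klinear_comp_mzero_left[OF k Ob(2) g] .
  finally show ?thesis
    unfolding is_zero_def using Ob by simp
qed

lemma slicing_Ob:
  assumes "slicing C P" "A \<in> P \<phi>" shows "A \<in> Ob C"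
  using assms(2) assms(1)[unfolded slicing_def, THEN conjunct1] by blast

lemma slicing_Hom_nonzero_le:
  assumes "slicing C P" "A1 \<in> P \<phi>1" "A2 \<in> P \<phi>2" "Hom C A1 A2 \<noteq> {mzero C A1 A2}"
  shows "\<phi>1 \<le> \<phi>2"
  using assms unfolding slicing_def by (meson not_le)

lemma slicing_phase_eq:
  assumes k: "klinear C" and P: "slicing C P" and A: "A \<in> P \<phi>" and A0: "\<not> is_zero C A"
  shows "phase P A = \<phi>"
  unfolding phase_def
proof (rule the_equality)
  fix \<psi> assume A': "A \<in> P \<psi>"
  have "Hom C A A \<noteq> {mzero C A A}"
    using is_zero_iff_Hom_trivial[OF k slicing_Ob[OF P A]] A0 by simp
  then show "\<psi> = \<phi>"
    using slicing_Hom_nonzero_le[OF P A A'] slicing_Hom_nonzero_le[OF P A' A] by simp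
qed (rule A)

lemma slicing_HN_filtration:
  assumes "slicing C P" "E \<in> Ob C" "\<not> is_zero C E"
  obtains n Eo A ph f g h where "is_zero C (Eo (0::nat))" "Eo n = E"
    "\<forall>i\<in>{1..n}. (Eo (i - 1), Eo i, A i, f i, g i, h i) \<in> dist C \<and> A i \<in> P (ph i)"
  using assms unfolding slicing_def
  by (elim conjE) (drule (1) bspec, drule (1) mp, elim exE conjE, blast)

lemma slicing_nonzero_semistable_exists:
  assumes t: "triangulated C" and P: "slicing C P" and E: "E \<in> Ob C" "\<not> is_zero C E"
  shows "\<exists>\<phi> A. A \<in> P \<phi> \<and> \<not> is_zero C A"
proof -
  obtain n Eo A ph f g h where Eo0: "is_zero C (Eo (0::nat))" and "Eo n = E"
    and HN: "\<forall>i\<in>{1..n}. (Eo (i - 1), Eo i, A i, f i, g i, h i) \<in> dist C \<and> A i \<in> P (ph i)"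
    using slicing_HN_filtration[OF P E] .
  \<comment> \<open>the factor at the first nonzero step of the filtration is nonzero\<close>
  define i where "i = (LEAST i. \<not> is_zero C (Eo i))"
  have Eoi: "\<not> is_zero C (Eo i)"
    unfolding i_def by (rule LeastI[of _ n]) (use \<open>Eo n = E\<close> E in simp)
  have "i \<le> n"
    unfolding i_def by (rule Least_le) (use \<open>Eo n = E\<close> E in simp)
  moreover have "i \<noteq> 0"
    using Eoi Eo0 by (cases i) auto
  ultimately have d: "(Eo (i - 1), Eo i, A i, f i, g i, h i) \<in> dist C" and "A i \<in> P (ph i)"
    using HN by auto
  moreover have "is_zero C (Eo (i - 1))"
    using not_less_Least[of "i - 1" "\<lambda>i. \<not> is_zero C (Eo i)"] \<open>i \<noteq> 0\<close>
    unfolding i_def[symmetric] by simp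
  ultimately show ?thesis
    using triangulated_dist_is_zero_middle[OF t d] Eoi by blast
qed

lemma functor_phase_in_slice:
  assumes k: "klinear C" and P: "slicing C P" and F: "autoequiv C F Fm"
    and s: "functor_phase C P F s" and A: "A \<in> P \<phi>" and A0: "\<not> is_zero C A"
  shows "F A \<in> P (\<phi> + s)"
proof -
  have A_ss: "A \<in> semistables P"
    using A unfolding semistables_def by blast
  then have "F A \<in> semistables P" and shift: "phase P (F A) - phase P A = s"
    using s A0 unfolding functor_phase_def by simp_all
  then obtain \<psi> where FA: "F A \<in> P \<psi>"
    unfolding semistables_def by blast
  have "\<not> is_zero C (F A)"
    using autoequiv_reflects_is_zero[OF k F slicing_Ob[OF P A]] A0 by blast
  then have "\<psi> = \<phi> + s"
    using shift slicing_phase_eq[OF k P FA] slicing_phase_eq[OF k P A A0] by simp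
  then show ?thesis
    using FA by simp
qed

lemma lin_funcs_Hom_trivial:
  assumes k: "klinear C" and Ob: "M \<in> Ob C" "N \<in> Ob C" and H: "Hom C M N = {mzero C M N}"
  shows "lin_funcs C M N = {\<lambda>_. 0}"
proof (intro equalityI subsetI)
  fix \<xi> assume \<xi>: "\<xi> \<in> lin_funcs C M N"
  have "\<xi> (mzero C M N) = \<xi> (madd C (mzero C M N) (mzero C M N))"
    using klinear_Hom_space(4)[OF k Ob] H by simp
  also have "\<dots> = \<xi> (mzero C M N) + \<xi> (mzero C M N)"
    using \<xi> H unfolding lin_funcs_def by simp
  finally have "\<xi> (mzero C M N) = 0"
    by (metis add_cancel_right_right)
  moreover have "\<xi> x = 0" if "x \<notin> Hom C M N" for x
    using \<xi> that unfolding lin_funcs_def by simp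
  ultimately have "\<xi> = (\<lambda>_. 0)"
    using H by (intro ext) (metis singletonD)
  then show "\<xi> \<in> {\<lambda>_. 0}"
    by simp
qed (simp add: lin_funcs_def)

lemma serre_functor_autoequiv: "serre_functor C So Sm \<Longrightarrow> autoequiv C So Sm"
  unfolding serre_functor_def by simp

lemma autoequiv_Ob: "autoequiv C F Fm \<Longrightarrow> X \<in> Ob C \<Longrightarrow> F X \<in> Ob C"
  unfolding autoequiv_def kfunctor_def by simp

lemma serre_functor_duality:
  assumes "serre_functor C So Sm" "L \<in> Ob C" "M \<in> Ob C"
  obtains \<eta> where "bij_betw \<eta> (Hom C L M) (lin_funcs C M (So L))"
  using assms unfolding serre_functor_def by meson

lemma serre_functor_Hom_nonzero:
  assumes k: "klinear C" and S: "serre_functor C So Sm" and Ob: "L \<in> Ob C" "M \<in> Ob C"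
    and H: "Hom C L M \<noteq> {mzero C L M}"
  shows "Hom C M (So L) \<noteq> {mzero C M (So L)}"
proof
  assume H': "Hom C M (So L) = {mzero C M (So L)}"
  obtain \<eta> where \<eta>: "bij_betw \<eta> (Hom C L M) (lin_funcs C M (So L))"
    using serre_functor_duality[OF S Ob] .
  have "So L \<in> Ob C"
    using autoequiv_Ob[OF serre_functor_autoequiv[OF S] Ob(1)] .
  then have dual: "lin_funcs C M (So L) = {\<lambda>_. 0}"
    using lin_funcs_Hom_trivial[OF k Ob(2) _ H'] by simp
  have z: "mzero C L M \<in> Hom C L M"
    using klinear_Hom_space(1)[OF k Ob] .
  have "u = mzero C L M" if u: "u \<in> Hom C L M" for u
  proof -
    have "\<eta> u = \<eta> (mzero C L M)"
      using bij_betwE[OF \<eta>] u z unfolding dual by simp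
    then show ?thesis
      using inj_onD[OF bij_betw_imp_inj_on[OF \<eta>] _ u z] by simp
  qed
  then show False
    using H z by blast
qed

lemma serre_functor_phase_le:
  assumes k: "klinear C" and P: "slicing C P" and S: "serre_functor C So Sm"
    and s: "functor_phase C P So s"
    and A1: "A1 \<in> P \<phi>1" "\<not> is_zero C A1" and A2: "A2 \<in> P \<phi>2"
    and H: "Hom C A1 A2 \<noteq> {mzero C A1 A2}"
  shows "\<phi>2 \<le> \<phi>1 + s"
proof -
  have "So A1 \<in> P (\<phi>1 + s)"
    using functor_phase_in_slice[OF k P serre_functor_autoequiv[OF S] s A1] .
  moreover have "Hom C A2 (So A1) \<noteq> {mzero C A2 (So A1)}"
    using serre_functor_Hom_nonzero[OF k S slicing_Ob[OF P A1(1)] slicing_Ob[OF P A2] H] .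
  ultimately show ?thesis
    by (rule slicing_Hom_nonzero_le[OF P A2])
qed

lemma gldim_eqI:
  assumes bound: "\<And>\<phi>1 \<phi>2 A1 A2. A1 \<in> P \<phi>1 \<Longrightarrow> A2 \<in> P \<phi>2 \<Longrightarrow> \<not> is_zero C A1 \<Longrightarrow>
      \<not> is_zero C A2 \<Longrightarrow> Hom C A1 A2 \<noteq> {mzero C A1 A2} \<Longrightarrow> \<phi>2 - \<phi>1 \<le> s"
    and attained: "A1 \<in> P \<phi>1" "A2 \<in> P \<phi>2" "\<not> is_zero C A1" "\<not> is_zero C A2"
      "Hom C A1 A2 \<noteq> {mzero C A1 A2}" "\<phi>2 - \<phi>1 = s"
  shows "gldim C P = ereal s"
proof -
  let ?D = "{ereal (\<phi>2 - \<phi>1) | \<phi>1 \<phi>2. \<exists>A1\<in>P \<phi>1. \<exists>A2\<in>P \<phi>2.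
      \<not> is_zero C A1 \<and> \<not> is_zero C A2 \<and> Hom C A1 A2 \<noteq> {mzero C A1 A2}}"
  have upper: "y \<le> ereal s" if y: "y \<in> ?D" for y
  proof -
    obtain \<phi>1 \<phi>2 A1 A2 where "y = ereal (\<phi>2 - \<phi>1)" "A1 \<in> P \<phi>1" "A2 \<in> P \<phi>2"
      "\<not> is_zero C A1" "\<not> is_zero C A2" "Hom C A1 A2 \<noteq> {mzero C A1 A2}"
      using y by blast
    then show ?thesis
      using bound by simp
  qed
  have mem: "ereal s \<in> ?D"
    unfolding attained(6)[symmetric] using attained(1-5) by blast
  show ?thesis
    unfolding gldim_def by (rule Sup_eqI) (use upper mem in blast)+
qed

theorem proposition3p8:
  fixes C :: "('o, 'm, 'k::field) tricat"
    and So :: "'o \<Rightarrow> 'o" and Sm :: "'m \<Rightarrow> 'm"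
    and Z :: "'o \<Rightarrow> complex" and P :: "real \<Rightarrow> 'o set"
    and s :: real
  assumes "triangulated C"
    and "\<exists>X\<in>Ob C. \<not> is_zero C X"
    and "serre_functor C So Sm"
    and "stability_condition C Z P"
    and "functor_phase C P So s"
  shows "gldim C P = ereal s"
proof -
  note t = assms(1) and S = assms(3) and s = assms(5)
  have k: "klinear C"
    using triangulated_klinear[OF t] .
  have P: "slicing C P"
    using assms(4) unfolding stability_condition_def by simp
  obtain \<phi> A where A: "A \<in> P \<phi>" "\<not> is_zero C A"
    using slicing_nonzero_semistable_exists[OF t P] assms(2) by blast
  have A_Ob: "A \<in> Ob C"
    using slicing_Ob[OF P A(1)] .
  have "Hom C A A \<noteq> {mzero C A A}"
    using is_zero_iff_Hom_trivial[OF k A_Ob] A(2) by simp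
  then have A_SA: "Hom C A (So A) \<noteq> {mzero C A (So A)}"
    using serre_functor_Hom_nonzero[OF k S A_Ob A_Ob] by simp
  have SA: "So A \<in> P (\<phi> + s)"
    using functor_phase_in_slice[OF k P serre_functor_autoequiv[OF S] s A] .
  have SA_nonzero: "\<not> is_zero C (So A)"
    using autoequiv_reflects_is_zero[OF k serre_functor_autoequiv[OF S] A_Ob] A(2) by blast
  show ?thesis
  proof (rule gldim_eqI[OF _ A(1) SA A(2) SA_nonzero A_SA])
    fix \<phi>1 \<phi>2 A1 A2
    assume "A1 \<in> P \<phi>1" "A2 \<in> P \<phi>2" "\<not> is_zero C A1" "\<not> is_zero C A2"
      "Hom C A1 A2 \<noteq> {mzero C A1 A2}"
    then show "\<phi>2 - \<phi>1 \<le> s"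
      using serre_functor_phase_le[OF k P S s, of A1 \<phi>1 A2 \<phi>2] by simp
  qed simp
qed

end
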